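(* Assume $c_X>0$ and $\mathbf b_X-4\rho\in\Xi$, where $\mathbf b_X=\frac1V\int_{2P_+}y[1-\theta_X(y)]\pi(y)\,dy$. Then there exists $\lambda>0$ such that $$\mathcal L_X(u)\ge\lambda\int_{2P_+}u(y)\,\pi(y)\,[1-\theta_X(y)]\,dy\qquad\text{for all }u\in\hat{\mathcal C}_W.$$
   Context: $G$ is a connected complex reductive group of complex dimension $n$, $K$ a maximal compact subgroup with $G=K^{\mathbb C}$, $T\subset K$ a maximal torus, $T^{\mathbb C}$ its complexification, $J$ the complex structure, $\mathfrak a=J\mathfrak t$. $\Phi$ is the root system of $(G,T^{\mathbb C})$, $\Phi_+$ a choice of positive roots, $W$ the Weyl group, $\rho=\frac12\sum_{\alpha\in\Phi_+}\alpha$. $\mathfrak a=\mathfrak a_t\oplus\mathfrak a_{ss}$ with $\mathfrak a_t=\mathfrak z(\mathfrak g)\cap\mathfrak a$, $\mathfrak a_{ss}=\mathfrak a\cap[\mathfrak g,\mathfrak g]$; $\langle\cdot,\cdot\rangle$ is a scalar product on $\mathfrak a$ extending the Killing form on $\mathfrak a_{ss}$ with $\mathfrak a_t\perp\mathfrak a_{ss}$; roots are viewed in $\mathfrak a^*\cong\mathfrak a$. $\mathfrak a^*_+=\{y:\langle\alpha,y\rangle>0\ \forall\alpha\in\Phi_+\}$; $\Xi$ is the relative interior of the cone generated by $\Phi_+$. $dy$ is Lebesgue measure on $\mathfrak a^*$ normalized by the character lattice of $T^{\mathbb C}$; $\pi(y)=\prod_{\alpha\in\Phi_+}\langle\alpha,y\rangle^2$.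 $M$ is a Fano compactification of $G$ (compact Fano manifold with holomorphic $G\times G$-action having an open dense orbit isomorphic to $G$ as a $G\times G$-homogeneous space, $-K_M$ $G\times G$-linearized), $P\subset\mathfrak a^*$ the $W$-invariant moment polytope of $(Z,-K_M|_Z)$, $Z=\overline{T^{\mathbb C}}$, w.r.t. a $K\times K$-invariant Kähler form in $2\pi c_1(M)$; $P_+=P\cap\overline{\mathfrak a^*_+}$; $V=\int_{2P_+}\pi dy$; $O$ is the origin of $\mathfrak a^*$ (an interior point of $2P$), and $4\rho$ lies in the interior of $2P_+$. $\theta_X(y)=\langle\xi_X,y-\mathbf b\rangle$ with $\mathbf b=\frac1V\int_{2P_+}y\pi(y)dy$ and $\xi_X\in\mathfrak a_t$ the unique element with $\int_{2P_+}\langle v,y\rangle(1-\theta_X(y))\pi(y)dy=0$ for all $v\in\mathfrak a_t$ (the normalized potential of the extremal vector field, as a function on $2P$); $c_X=\min_{\overline{2P}}(1-\theta_X)$. $\mathcal L_X(u)=\frac1V\int_{2P_+}u\,\pi\,[1-\theta_X]\,dy-u(4\rho)$. $\mathcal C_W$ is the set of strictly convex $W$-invariant functions $u$ on $2P$ such that $u-u_G$ is smooth on $\overline{2P}$, where, writing $2P=\{y:\ell_k(y)\ge0,\ k=1,\dots,d\}$ with affine $\ell_k$ defining the facets, $u_G=\frac12\sum_k\ell_k\log\ell_k$ is the Guillemin function. $\hat{\mathcal C}_W=\{u\in\mathcal C_W: u(O)=0,\ \nabla u(O)=0\}$ (for $u\in\mathcal C_W$, $\hat u(y)=u(y)-\langle\nabla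 u(O),y\rangle-u(O)$ lies in $\hat{\mathcal C}_W$). *)

theory Defs
  imports "HOL-Analysis.Analysis"
begin

text \<open>All objects live in the real Euclidean space 'a, playing the role of a* (identified with a
  via the fixed scalar product).\<close>

definition root_refl :: "'a::euclidean_space \<Rightarrow> 'a \<Rightarrow> 'a" where
  "root_refl \<alpha> y = y - (2 * (\<alpha> \<bullet> y) / (\<alpha> \<bullet> \<alpha>)) *\<^sub>R \<alpha>"

inductive_set weyl_group :: "'a::euclidean_space set \<Rightarrow> ('a \<Rightarrow> 'a) set" for R where
  id: "id \<in> weyl_group R"
| step: "w \<in> weyl_group R \<Longrightarrow> \<alpha> \<in> R \<Longrightarrow> root_refl \<alpha> \<circ> w \<in> weyl_group R"

definition positive_root_system :: "'a::euclidean_space set \<Rightarrow> bool" where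
  "positive_root_system R \<longleftrightarrow> finite R \<and> 0 \<notin> R
     \<and> (\<forall>\<alpha>\<in>R. \<forall>\<beta>\<in>R. root_refl \<alpha> \<beta> \<in> R \<union> uminus ` R)
     \<and> (\<forall>\<alpha>\<in>R. \<forall>\<beta>\<in>R. 2 * (\<alpha> \<bullet> \<beta>) / (\<alpha> \<bullet> \<alpha>) \<in> \<int>)
     \<and> (\<forall>\<alpha>\<in>R. \<forall>r::real. r *\<^sub>R \<alpha> \<in> R \<union> uminus ` R \<longrightarrow> r = 1 \<or> r = -1)
     \<and> (\<exists>t. \<forall>\<alpha>\<in>R. t \<bullet> \<alpha> > 0)"

definition rho :: "'a::euclidean_space set \<Rightarrow> 'a" where
  "rho R = (1/2) *\<^sub>R (\<Sum>\<alpha>\<in>R. \<alpha>)"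

definition piR :: "'a::euclidean_space set \<Rightarrow> 'a \<Rightarrow> real" where
  "piR R y = (\<Prod>\<alpha>\<in>R. (\<alpha> \<bullet> y)\<^sup>2)"

definition a_t :: "'a::euclidean_space set \<Rightarrow> 'a set" where
  "a_t R = {v. \<forall>\<alpha>\<in>R. \<alpha> \<bullet> v = 0}"

definition pos_cone :: "'a::euclidean_space set \<Rightarrow> 'a set" where
  "pos_cone R = {y. \<exists>c. (\<forall>\<alpha>\<in>R. 0 \<le> c \<alpha>) \<and> y = (\<Sum>\<alpha>\<in>R. c \<alpha> *\<^sub>R \<alpha>)}"

definition Xi :: "'a::euclidean_space set \<Rightarrow> 'a set" where
  "Xi R = rel_interior (pos_cone R)"

text \<open>The polytope 2P = {y. \<forall>k<d. l_k(y) \<ge> 0} with l_k(y) = a k \<bullet> y + c k.\<close>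
definition ell :: "(nat \<Rightarrow> 'a::euclidean_space) \<Rightarrow> (nat \<Rightarrow> real) \<Rightarrow> nat \<Rightarrow> 'a \<Rightarrow> real" where
  "ell a c k y = a k \<bullet> y + c k"

definition polyQ :: "(nat \<Rightarrow> 'a::euclidean_space) \<Rightarrow> (nat \<Rightarrow> real) \<Rightarrow> nat \<Rightarrow> 'a set" where
  "polyQ a c d = {y. \<forall>k<d. 0 \<le> ell a c k y}"

definition facet_presentation :: "(nat \<Rightarrow> 'a::euclidean_space) \<Rightarrow> (nat \<Rightarrow> real) \<Rightarrow> nat \<Rightarrow> bool" where
  "facet_presentation a c d \<longleftrightarrow>
     bounded (polyQ a c d) \<and> interior (polyQ a c d) \<noteq> {}
     \<and> (\<forall>k<d. {y \<in> polyQ a c d. ell a c k y = 0} facet_of polyQ a c d)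
     \<and> inj_on (\<lambda>k. {y \<in> polyQ a c d. ell a c k y = 0}) {..<d}
     \<and> (\<forall>F. F facet_of polyQ a c d \<longrightarrow> (\<exists>k<d. F = {y \<in> polyQ a c d. ell a c k y = 0}))"

text \<open>2P_+ = 2P \<inter> closure of the positive Weyl chamber.\<close>
definition polyQ_plus :: "'a::euclidean_space set \<Rightarrow> (nat \<Rightarrow> 'a) \<Rightarrow> (nat \<Rightarrow> real) \<Rightarrow> nat \<Rightarrow> 'a set" where
  "polyQ_plus R a c d = polyQ a c d \<inter> {y. \<forall>\<alpha>\<in>R. 0 \<le> \<alpha> \<bullet> y}"

text \<open>Guillemin function (note: in Isabelle ln 0 = 0, so 0 * ln 0 = 0).\<close>
definition guillemin :: "(nat \<Rightarrow> 'a::euclidean_space) \<Rightarrow> (nat \<Rightarrow> real) \<Rightarrow> nat \<Rightarrow> 'a \<Rightarrow> real" where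
  "guillemin a c d y = (1/2) * (\<Sum>k<d. ell a c k y * ln (ell a c k y))"

coinductive smooth_on :: "'a::euclidean_space set \<Rightarrow> ('a \<Rightarrow> real) \<Rightarrow> bool" for U where
  "\<lbrakk>\<forall>x\<in>U. f differentiable (at x); continuous_on U f;
    \<forall>b\<in>Basis. smooth_on U (\<lambda>x. frechet_derivative f (at x) b)\<rbrakk> \<Longrightarrow> smooth_on U f"

definition smooth_on_closed :: "'a::euclidean_space set \<Rightarrow> ('a \<Rightarrow> real) \<Rightarrow> bool" where
  "smooth_on_closed S f \<longleftrightarrow> (\<exists>U g. open U \<and> S \<subseteq> U \<and> smooth_on U g \<and> (\<forall>y\<in>S. f y = g y))"

definition strictly_convex_on :: "'a::real_vector set \<Rightarrow> ('a \<Rightarrow> real) \<Rightarrow> bool" where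
  "strictly_convex_on S f \<longleftrightarrow> convex S \<and>
     (\<forall>x\<in>S. \<forall>y\<in>S. x \<noteq> y \<longrightarrow> (\<forall>t::real. 0 < t \<and> t < 1 \<longrightarrow>
        f ((1 - t) *\<^sub>R x + t *\<^sub>R y) < (1 - t) * f x + t * f y))"

definition C_W :: "'a::euclidean_space set \<Rightarrow> (nat \<Rightarrow> 'a) \<Rightarrow> (nat \<Rightarrow> real) \<Rightarrow> nat \<Rightarrow> ('a \<Rightarrow> real) set" where
  "C_W R a c d = {u. strictly_convex_on (polyQ a c d) u
      \<and> (\<forall>w\<in>weyl_group R. \<forall>y\<in>polyQ a c d. u (w y) = u y)
      \<and> smooth_on_closed (polyQ a c d) (\<lambda>y. u y - guillemin a c d y)}"

definition hatC_W :: "'a::euclidean_space set \<Rightarrow> (nat \<Rightarrow> 'a) \<Rightarrow> (nat \<Rightarrow> real) \<Rightarrow> nat \<Rightarrow> ('a \<Rightarrow> real) set" where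
  "hatC_W R a c d = {u \<in> C_W R a c d. u 0 = 0 \<and> (u has_derivative (\<lambda>h. 0)) (at 0)}"

definition volV :: "'a::euclidean_space set \<Rightarrow> (nat \<Rightarrow> 'a) \<Rightarrow> (nat \<Rightarrow> real) \<Rightarrow> nat \<Rightarrow> real" where
  "volV R a c d = (LINT y : polyQ_plus R a c d | lborel. piR R y)"

definition barycenter :: "'a::euclidean_space set \<Rightarrow> (nat \<Rightarrow> 'a) \<Rightarrow> (nat \<Rightarrow> real) \<Rightarrow> nat \<Rightarrow> 'a" where
  "barycenter R a c d = (1 / volV R a c d) *\<^sub>R (LINT y : polyQ_plus R a c d | lborel. piR R y *\<^sub>R y)"

definition thetaX :: "'a::euclidean_space set \<Rightarrow> (nat \<Rightarrow> 'a) \<Rightarrow> (nat \<Rightarrow> real) \<Rightarrow> nat \<Rightarrow> 'a \<Rightarrow> 'a \<Rightarrow> real" where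
  "thetaX R a c d \<xi> y = \<xi> \<bullet> (y - barycenter R a c d)"

definition is_xiX :: "'a::euclidean_space set \<Rightarrow> (nat \<Rightarrow> 'a) \<Rightarrow> (nat \<Rightarrow> real) \<Rightarrow> nat \<Rightarrow> 'a \<Rightarrow> bool" where
  "is_xiX R a c d \<xi> \<longleftrightarrow> \<xi> \<in> a_t R \<and>
     (\<forall>v\<in>a_t R. (LINT y : polyQ_plus R a c d | lborel.
        (v \<bullet> y) * (1 - thetaX R a c d \<xi> y) * piR R y) = 0)"

definition cX :: "'a::euclidean_space set \<Rightarrow> (nat \<Rightarrow> 'a) \<Rightarrow> (nat \<Rightarrow> real) \<Rightarrow> nat \<Rightarrow> 'a \<Rightarrow> real" where
  "cX R a c d \<xi> = Inf ((\<lambda>y. 1 - thetaX R a c d \<xi> y) ` polyQ a c d)"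

definition bX :: "'a::euclidean_space set \<Rightarrow> (nat \<Rightarrow> 'a) \<Rightarrow> (nat \<Rightarrow> real) \<Rightarrow> nat \<Rightarrow> 'a \<Rightarrow> 'a" where
  "bX R a c d \<xi> = (1 / volV R a c d) *\<^sub>R
     (LINT y : polyQ_plus R a c d | lborel. ((1 - thetaX R a c d \<xi> y) * piR R y) *\<^sub>R y)"

definition LX :: "'a::euclidean_space set \<Rightarrow> (nat \<Rightarrow> 'a) \<Rightarrow> (nat \<Rightarrow> real) \<Rightarrow> nat \<Rightarrow> 'a \<Rightarrow> ('a \<Rightarrow> real) \<Rightarrow> real" where
  "LX R a c d \<xi> u = (1 / volV R a c d) *
     (LINT y : polyQ_plus R a c d | lborel. u y * piR R y * (1 - thetaX R a c d \<xi> y))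
     - u (4 *\<^sub>R rho R)"

end

theory Submission
  imports Defs "HOL-Real_Asymp.Real_Asymp"
begin

text \<open>A function u in hat C_W is convex, and by Weyl invariance its derivative at a point of the
  closed positive chamber is nonnegative on every positive root; hence u increases from 4\<rho> in the
  directions of the cone spanned by the positive roots. Since b_X - 4\<rho> lies in the relative interior
  of that cone, z = (1 - s) b_X still lies in 4\<rho> + cone for some s > 0, so u(4\<rho>) \<le> u(z).
  Integrating the tangent inequality at z against the nonnegative weight (1 - \<theta>_X)\<pi>, whose mass
  is V and whose barycentre is b_X, and combining with the tangent inequality towards the origin
  (where u vanishes), gives u(z) \<le> (1 - s) \<cdot> (1/V) \<integral> u \<pi> (1 - \<theta>_X). Therefore
  L_X(u) \<ge> s/V \<cdot> \<integral> u \<pi> (1 - \<theta>_X).\<close>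

lemma strictly_convex_on_imp_convex_on:
  assumes "strictly_convex_on S f"
  shows "convex_on S f"
proof (rule convex_onI)
  fix t :: real and x y assume t: "0 < t" "t < 1" and xy: "x \<in> S" "y \<in> S"
  show "f ((1 - t) *\<^sub>R x + t *\<^sub>R y) \<le> (1 - t) * f x + t * f y"
  proof (cases "x = y")
    case True then show ?thesis by (simp add: algebra_simps flip: scaleR_add_left)
  next
    case False then show ?thesis
      using assms t xy unfolding strictly_convex_on_def by (meson less_imp_le)
  qed
next
  show "convex S" using assms by (simp add: strictly_convex_on_def)
qed

lemma has_real_derivative_along_line:
  fixes u :: "'a::real_normed_vector \<Rightarrow> real"
  assumes "(u has_derivative D) (at x)"
  shows "((\<lambda>t. u (x + t *\<^sub>R h)) has_real_derivative D h) (at 0)"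
proof -
  have "((\<lambda>t. x + t *\<^sub>R h) has_derivative (\<lambda>t. t *\<^sub>R h)) (at 0)"
    by (auto intro!: derivative_eq_intros)
  then have "((u \<circ> (\<lambda>t. x + t *\<^sub>R h)) has_derivative (D \<circ> (\<lambda>t. t *\<^sub>R h))) (at 0)"
    using assms by (intro diff_chain_at) auto
  moreover have "D \<circ> (\<lambda>t. t *\<^sub>R h) = (*) (D h)"
    using linear_scale[OF has_derivative_linear[OF assms]] by (auto simp: fun_eq_iff)
  ultimately show ?thesis by (simp add: has_field_derivative_def o_def)
qed

lemma difference_quotient_tendsto_at_right:
  fixes g :: "real \<Rightarrow> real"
  assumes "(g has_real_derivative g') (at 0)"
  shows "((\<lambda>t. (g t - g 0) / t) \<longlongrightarrow> g') (at_right 0)"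
proof -
  have "((\<lambda>t. (g t - g 0) / t) \<longlongrightarrow> g') (at 0)"
    using assms by (simp add: has_field_derivative_iff)
  then show ?thesis by (rule tendsto_mono[OF at_le[of "{0<..}" UNIV], rotated]) simp
qed

lemma convex_on_above_tangent:
  fixes u :: "'a::real_normed_vector \<Rightarrow> real"
  assumes u: "convex_on S u" and x: "x \<in> S" and y: "y \<in> S"
    and D: "(u has_derivative D) (at x)"
  shows "u x + D (y - x) \<le> u y"
proof -
  let ?g = "\<lambda>t. u (x + t *\<^sub>R (y - x))"
  have "\<forall>\<^sub>F t in at_right 0. (?g t - ?g 0) / t \<le> u y - u x"
  proof (rule eventually_mono[OF eventually_at_right_real[OF zero_less_one]])
    fix t :: real assume t: "t \<in> {0<..<1}"
    have "?g t = u ((1 - t) *\<^sub>R x + t *\<^sub>R y)" by (simp add: algebra_simps)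
    also have "\<dots> \<le> (1 - t) * u x + t * u y" using convex_onD[OF u] t x y by simp
    finally show "(?g t - ?g 0) / t \<le> u y - u x" using t by (simp add: field_simps)
  qed
  with difference_quotient_tendsto_at_right[OF has_real_derivative_along_line[OF D]]
  have "D (y - x) \<le> u y - u x" by (rule tendsto_upperbound) simp
  then show ?thesis by simp
qed

lemma root_refl_mem_weyl_group: "\<alpha> \<in> R \<Longrightarrow> root_refl \<alpha> \<in> weyl_group R"
  using weyl_group.step[OF weyl_group.id] by fastforce

lemma convex_on_root_refl_invariant_mono:
  fixes u :: "'a::euclidean_space \<Rightarrow> real"
  assumes u: "convex_on Q u"
    and refl: "\<And>y. y \<in> Q \<Longrightarrow> root_refl \<alpha> y \<in> Q \<and> u (root_refl \<alpha> y) = u y"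
    and x: "0 \<le> \<alpha> \<bullet> x" and t: "0 < t" and y: "x + t *\<^sub>R \<alpha> \<in> Q"
  shows "u x \<le> u (x + t *\<^sub>R \<alpha>)"
proof (cases "\<alpha> = 0")
  case True then show ?thesis by simp
next
  case False
  define k where "k = (\<alpha> \<bullet> x) / (\<alpha> \<bullet> \<alpha>)"
  define s where "s = t / (2 * t + 2 * k)"
  have k: "0 \<le> k" using x by (simp add: k_def)
  have s: "0 \<le> s" "s \<le> 1" using t k by (auto simp: s_def field_simps)
  let ?y = "x + t *\<^sub>R \<alpha>"
  \<comment> \<open>\<open>x\<close> lies on the segment from \<open>?y\<close> to its mirror image, where \<open>u\<close> takes the same value\<close>
  have "2 * (\<alpha> \<bullet> ?y) / (\<alpha> \<bullet> \<alpha>) = 2 * t + 2 * k"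
    using False by (simp add: k_def inner_add_right field_simps)
  then have mirror: "root_refl \<alpha> ?y = x - (t + 2 * k) *\<^sub>R \<alpha>"
    by (simp add: root_refl_def algebra_simps flip: scaleR_add_left)
  have "(1 - s) *\<^sub>R ?y + s *\<^sub>R root_refl \<alpha> ?y = x + ((1 - s) * t - s * (t + 2 * k)) *\<^sub>R \<alpha>"
    unfolding mirror by (simp add: algebra_simps flip: scaleR_add_left)
  also have "(1 - s) * t - s * (t + 2 * k) = 0"
    using t k by (simp add: s_def field_simps)
  finally have comb: "x = (1 - s) *\<^sub>R ?y + s *\<^sub>R root_refl \<alpha> ?y" by simp
  have "u x \<le> (1 - s) * u ?y + s * u (root_refl \<alpha> ?y)"
    by (subst comb) (rule convex_onD[OF u s y conjunct1[OF refl[OF y]]])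
  also have "\<dots> = u ?y" using refl[OF y] by (simp add: algebra_simps)
  finally show ?thesis .
qed

lemma convex_on_root_refl_invariant_derivative_nonneg:
  fixes u :: "'a::euclidean_space \<Rightarrow> real"
  assumes u: "convex_on Q u"
    and refl: "\<And>y. y \<in> Q \<Longrightarrow> root_refl \<alpha> y \<in> Q \<and> u (root_refl \<alpha> y) = u y"
    and x: "x \<in> interior Q" "0 \<le> \<alpha> \<bullet> x"
    and D: "(u has_derivative D) (at x)"
  shows "0 \<le> D \<alpha>"
proof -
  let ?g = "\<lambda>t. u (x + t *\<^sub>R \<alpha>)"
  have "((\<lambda>t. x + t *\<^sub>R \<alpha>) \<longlongrightarrow> x) (at_right 0)"
    by (auto intro!: tendsto_eq_intros)
  then have "\<forall>\<^sub>F t in at_right 0. x + t *\<^sub>R \<alpha> \<in> interior Q"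
    using topological_tendstoD open_interior x(1) by blast
  then have "\<forall>\<^sub>F t in at_right 0. 0 \<le> (?g t - ?g 0) / t"
  proof (rule eventually_mono[OF eventually_conj[OF _ eventually_at_right_less]])
    fix t :: real assume "x + t *\<^sub>R \<alpha> \<in> interior Q \<and> 0 < t"
    then show "0 \<le> (?g t - ?g 0) / t"
      using convex_on_root_refl_invariant_mono[OF u refl x(2)] interior_subset by fastforce
  qed
  with difference_quotient_tendsto_at_right[OF has_real_derivative_along_line[OF D]]
  show ?thesis by (rule tendsto_lowerbound) simp
qed

lemma convex_on_root_refl_invariant_mono_pos_cone:
  fixes u :: "'a::euclidean_space \<Rightarrow> real"
  assumes u: "convex_on Q u"
    and refl: "\<And>\<alpha> y. \<alpha> \<in> R \<Longrightarrow> y \<in> Q \<Longrightarrow> root_refl \<alpha> y \<in> Q \<and> u (root_refl \<alpha> y) = u y"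
    and q: "q \<in> interior Q" "\<And>\<alpha>. \<alpha> \<in> R \<Longrightarrow> 0 \<le> \<alpha> \<bullet> q"
    and D: "(u has_derivative D) (at q)"
    and z: "z \<in> Q" "z - q \<in> pos_cone R"
  shows "u q \<le> u z"
proof -
  obtain \<mu> where \<mu>: "\<And>\<alpha>. \<alpha> \<in> R \<Longrightarrow> 0 \<le> \<mu> \<alpha>" "z - q = (\<Sum>\<alpha>\<in>R. \<mu> \<alpha> *\<^sub>R \<alpha>)"
    using z(2) unfolding pos_cone_def by blast
  have lin: "linear D" using D by (rule has_derivative_linear)
  have "D (z - q) = (\<Sum>\<alpha>\<in>R. \<mu> \<alpha> * D \<alpha>)"
    unfolding \<mu>(2) by (simp add: linear_sum[OF lin] linear_scale[OF lin])
  also have "\<dots> \<ge> 0"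
    using \<mu>(1) convex_on_root_refl_invariant_derivative_nonneg[OF u refl q(1) q(2) D]
    by (intro sum_nonneg mult_nonneg_nonneg) auto
  finally have "0 \<le> D (z - q)" .
  moreover have "u q + D (z - q) \<le> u z"
    using convex_on_above_tangent[OF u _ z(1) D] q(1) interior_subset by blast
  ultimately show ?thesis by simp
qed

lemma interior_subset_halfspace_gt:
  fixes a :: "'a::euclidean_space"
  assumes "S \<subseteq> {y. b \<le> a \<bullet> y}" "a \<noteq> 0" "x \<in> interior S"
  shows "b < a \<bullet> x"
  using interior_mono[OF assms(1)] assms(2,3) by auto

lemma polyQ_eq_Inter_halfspaces: "polyQ a c d = (\<Inter>k<d. {y. - c k \<le> a k \<bullet> y})"
proof -
  have "0 \<le> ell a c k y \<longleftrightarrow> - c k \<le> a k \<bullet> y" for k y by (auto simp: ell_def)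
  then show ?thesis by (auto simp: polyQ_def)
qed

lemma closed_polyQ: "closed (polyQ a c d)"
  unfolding polyQ_eq_Inter_halfspaces by (intro closed_INT ballI closed_halfspace_ge)

lemma convex_polyQ: "convex (polyQ a c d)"
  unfolding polyQ_eq_Inter_halfspaces by (intro convex_INT ballI convex_halfspace_ge)

lemma compact_polyQ_plus:
  assumes "bounded (polyQ a c d)"
  shows "compact (polyQ_plus R a c d)"
proof -
  have "polyQ_plus R a c d = polyQ a c d \<inter> (\<Inter>\<alpha>\<in>R. {y. 0 \<le> \<alpha> \<bullet> y})"
    by (auto simp: polyQ_plus_def)
  then have "closed (polyQ_plus R a c d)"
    by (simp add: closed_Int closed_polyQ closed_INT closed_halfspace_ge)
  moreover have "bounded (polyQ_plus R a c d)"
    using assms by (rule bounded_subset) (auto simp: polyQ_plus_def)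
  ultimately show ?thesis by (simp add: compact_eq_bounded_closed)
qed

lemma ell_pos_interior_polyQ:
  assumes "k < d" "a k \<noteq> 0" "x \<in> interior (polyQ a c d)"
  shows "0 < ell a c k x"
proof -
  have "polyQ a c d \<subseteq> {y. - c k \<le> a k \<bullet> y}"
    using assms(1) by (auto simp: polyQ_eq_Inter_halfspaces)
  from interior_subset_halfspace_gt[OF this assms(2,3)] show ?thesis by (simp add: ell_def)
qed

lemma continuous_on_x_ln_x: "continuous_on {0..} (\<lambda>x::real. x * ln x)"
proof -
  have "((\<lambda>x::real. x * ln x) \<longlongrightarrow> 0) (at_right 0)" by real_asymp
  moreover have "at (0::real) within {0..} = at_right 0"
    by (rule at_within_nhd[of _ UNIV]) auto
  ultimately have "continuous (at 0 within {0..}) (\<lambda>x::real. x * ln x)"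
    by (simp add: continuous_within)
  moreover have "continuous (at x within {0..}) (\<lambda>x::real. x * ln x)" if "0 < x" for x
    using that by (auto intro!: continuous_intros)
  ultimately show ?thesis
    by (metis atLeast_iff continuous_on_eq_continuous_within order_less_le)
qed

lemma guillemin_differentiable:
  assumes "x \<in> interior (polyQ a c d)"
  shows "guillemin a c d differentiable (at x)"
proof -
  have "(\<lambda>y. ell a c k y * ln (ell a c k y)) differentiable (at x)" if "k < d" for k
  proof (cases "a k = 0")
    case True then show ?thesis by (simp add: ell_def)
  next
    case False
    then have "0 < ell a c k x" using ell_pos_interior_polyQ that assms by blast
    then show ?thesis unfolding ell_def differentiable_def
      by (auto intro!: derivative_eq_intros)
  qed
  then show ?thesis unfolding guillemin_def
    by (intro differentiable_mult differentiable_const differentiable_sum) auto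
qed

lemma continuous_on_guillemin: "continuous_on (polyQ a c d) (guillemin a c d)"
proof -
  have terms: "continuous_on (polyQ a c d) (\<lambda>y. ell a c k y * ln (ell a c k y))" if "k < d" for k
  proof (rule continuous_on_compose2[OF continuous_on_x_ln_x])
    show "continuous_on (polyQ a c d) (ell a c k)" unfolding ell_def by (intro continuous_intros)
    show "ell a c k ` polyQ a c d \<subseteq> {0..}" using that by (auto simp: polyQ_def)
  qed
  then show ?thesis unfolding guillemin_def
    by (rule continuous_on_mult[OF continuous_on_const continuous_on_sum]) (simp add: terms)
qed

lemma C_W_decomposition:
  assumes "u \<in> C_W R a c d"
  obtains U g where "open U" "polyQ a c d \<subseteq> U" "continuous_on U g"
    "\<And>x. x \<in> U \<Longrightarrow> g differentiable (at x)"
    "\<And>y. y \<in> polyQ a c d \<Longrightarrow> u y = g y + guillemin a c d y"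
proof -
  obtain U g where "open U" "polyQ a c d \<subseteq> U" "smooth_on U g"
    and "\<forall>y\<in>polyQ a c d. u y - guillemin a c d y = g y"
    using assms by (auto simp: C_W_def smooth_on_closed_def)
  with that show ?thesis by (fastforce elim: smooth_on.cases)
qed

lemma C_W_differentiable:
  assumes "u \<in> C_W R a c d" and x: "x \<in> interior (polyQ a c d)"
  shows "u differentiable (at x)"
proof -
  obtain U g where U: "polyQ a c d \<subseteq> U" "\<And>x. x \<in> U \<Longrightarrow> g differentiable (at x)"
    and u: "\<And>y. y \<in> polyQ a c d \<Longrightarrow> u y = g y + guillemin a c d y"
    using C_W_decomposition[OF assms(1)] by metis
  have "(\<lambda>y. g y + guillemin a c d y) differentiable (at x)"
    using U x interior_subset guillemin_differentiable[OF x] by (blast intro: differentiable_add)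
  then obtain D where D: "((\<lambda>y. g y + guillemin a c d y) has_derivative D) (at x)"
    by (auto simp: differentiable_def)
  have "(u has_derivative D) (at x)"
    using D open_interior x
    by (rule has_derivative_transform_within_open) (simp add: u interior_subset[THEN subsetD])
  then show ?thesis by (auto simp: differentiable_def)
qed

lemma C_W_continuous_on:
  assumes "u \<in> C_W R a c d"
  shows "continuous_on (polyQ a c d) u"
proof -
  obtain U g where U: "polyQ a c d \<subseteq> U" "continuous_on U g"
    and u: "\<And>y. y \<in> polyQ a c d \<Longrightarrow> u y = g y + guillemin a c d y"
    using C_W_decomposition[OF assms] by metis
  have "continuous_on (polyQ a c d) (\<lambda>y. g y + guillemin a c d y)"
    using continuous_on_subset[OF U(2,1)] continuous_on_guillemin by (rule continuous_on_add)
  then show ?thesis by (rule continuous_on_eq) (use u in auto)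
qed

lemma set_integrable_compact_continuous:
  fixes f :: "'a::euclidean_space \<Rightarrow> 'b::{banach, second_countable_topology}"
  assumes "compact S" "continuous_on S f"
  shows "set_integrable lborel S f"
  unfolding set_integrable_def using assms by (rule borel_integrable_compact)

lemma set_integrable_bounded_linear:
  assumes "bounded_linear T" "set_integrable M A f"
  shows "set_integrable M A (\<lambda>x. T (f x))"
proof -
  have "(\<lambda>x. indicator A x *\<^sub>R T (f x)) = (\<lambda>x. T (indicator A x *\<^sub>R f x))"
    using linear_scale[OF bounded_linear.linear[OF assms(1)]] by simp
  then show ?thesis
    using integrable_bounded_linear[OF assms(1), of M "\<lambda>x. indicator A x *\<^sub>R f x"] assms(2)
    by (simp add: set_integrable_def)
qed

lemma set_integral_bounded_linear:
  assumes "bounded_linear T" "set_integrable M A f"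
  shows "(LINT x:A|M. T (f x)) = T (LINT x:A|M. f x)"
proof -
  have "(\<lambda>x. indicator A x *\<^sub>R T (f x)) = (\<lambda>x. T (indicator A x *\<^sub>R f x))"
    using linear_scale[OF bounded_linear.linear[OF assms(1)]] by simp
  then show ?thesis
    using integral_bounded_linear[OF assms(1), of M "\<lambda>x. indicator A x *\<^sub>R f x"] assms(2)
    by (simp add: set_lebesgue_integral_def set_integrable_def)
qed

lemma set_integral_pos_if_pos_at_interior:
  fixes f :: "'a::euclidean_space \<Rightarrow> real"
  assumes S: "compact S" and f: "continuous_on S f" "\<And>y. y \<in> S \<Longrightarrow> 0 \<le> f y"
    and x: "x \<in> interior S" "0 < f x"
  shows "0 < (LINT y:S|lborel. f y)"
proof -
  have "isCont f x" using continuous_on_interior[OF f(1) x(1)] .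
  then obtain \<delta> where \<delta>: "0 < \<delta>" "\<And>y. dist y x < \<delta> \<Longrightarrow> dist (f y) (f x) < f x / 2"
    using x(2) unfolding continuous_at_eps_delta by (meson half_gt_zero)
  obtain e where e: "0 < e" "ball x e \<subseteq> S" using x(1) mem_interior by blast
  define r where "r = min \<delta> e"
  have r: "0 < r" "ball x r \<subseteq> S" using \<delta> e by (auto simp: r_def)
  have ball: "(\<lambda>y. indicator S y *\<^sub>R (f x / 2 * indicator (ball x r) y))
      = (\<lambda>y. f x / 2 * indicator (ball x r) y :: real)"
    using r(2) by (auto simp: indicator_def fun_eq_iff)
  have "0 < f x / 2 * measure lborel (ball x r)"
    using content_ball_pos[OF r(1)] x(2) by simp
  also have "\<dots> = (LINT y:S|lborel. f x / 2 * indicator (ball x r) y)"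
    unfolding set_lebesgue_integral_def ball by simp
  also have "\<dots> \<le> (LINT y:S|lborel. f y)"
  proof (rule set_integral_mono)
    show "set_integrable lborel S (\<lambda>y. f x / 2 * indicator (ball x r) y)"
      unfolding set_integrable_def ball
      by (intro integrable_mult_right integrable_real_indicator emeasure_bounded_finite) auto
    show "set_integrable lborel S f" using S f(1) by (rule set_integrable_compact_continuous)
    show "f x / 2 * indicator (ball x r) y \<le> f y" if "y \<in> S" for y
    proof (cases "y \<in> ball x r")
      case True
      then have "dist y x < \<delta>" by (simp add: r_def dist_commute)
      then have "dist (f y) (f x) < f x / 2" by (rule \<delta>(2))
      then have "f x / 2 \<le> f y"
        using abs_ge_minus_self[of "f y - f x"] unfolding dist_real_def by linarith
      then show ?thesis using True by simp
    qed (use f(2)[OF that] in simp)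
  qed
  finally show ?thesis .
qed

lemma weighted_mean_in_halfspace:
  fixes w :: "'a::euclidean_space \<Rightarrow> real"
  assumes w: "set_integrable lborel S w" "set_integrable lborel S (\<lambda>y. w y *\<^sub>R y)"
    "\<And>y. y \<in> S \<Longrightarrow> 0 \<le> w y"
    and V: "(LINT y:S|lborel. w y) = V" "0 < V"
    and S: "\<And>y. y \<in> S \<Longrightarrow> b \<le> v \<bullet> y"
  shows "b \<le> v \<bullet> ((1 / V) *\<^sub>R (LINT y:S|lborel. w y *\<^sub>R y))"
proof -
  have "b * V = (LINT y:S|lborel. w y * b)" using V(1) by simp
  also have "\<dots> \<le> (LINT y:S|lborel. v \<bullet> (w y *\<^sub>R y))"
  proof (rule set_integral_mono)
    show "set_integrable lborel S (\<lambda>y. v \<bullet> (w y *\<^sub>R y))"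
      using bounded_linear_inner_right w(2) by (rule set_integrable_bounded_linear)
  qed (use w S in \<open>auto intro: mult_left_mono\<close>)
  also have "\<dots> = v \<bullet> (LINT y:S|lborel. w y *\<^sub>R y)"
    using w(2) by (rule set_integral_bounded_linear[OF bounded_linear_inner_right])
  finally show ?thesis using V(2) by (simp add: field_simps)
qed

lemma convex_on_le_shrunk_weighted_mean:
  fixes u w :: "'a::euclidean_space \<Rightarrow> real"
  assumes u: "convex_on Q u" "0 \<in> Q" "u 0 = 0" and S: "S \<subseteq> Q"
    and w: "set_integrable lborel S w" "set_integrable lborel S (\<lambda>y. w y *\<^sub>R y)"
      "set_integrable lborel S (\<lambda>y. w y * u y)" "\<And>y. y \<in> S \<Longrightarrow> 0 \<le> w y"
    and V: "(LINT y:S|lborel. w y) = V" "0 < V"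
    and s: "0 \<le> s" "s \<le> 1"
    and z: "z = (1 - s) *\<^sub>R ((1 / V) *\<^sub>R (LINT y:S|lborel. w y *\<^sub>R y))" "z \<in> Q"
    and D: "(u has_derivative D) (at z)"
  shows "u z \<le> (1 - s) / V * (LINT y:S|lborel. w y * u y)"
proof -
  define B where "B = (1 / V) *\<^sub>R (LINT y:S|lborel. w y *\<^sub>R y)"
  have bl: "bounded_linear D" using D by (rule has_derivative_bounded_linear)
  note lin = bounded_linear.linear[OF bl]
  have Dz: "D z = (1 - s) * D B" by (simp add: z(1) B_def linear_scale[OF lin])
  have "(LINT y:S|lborel. D (w y *\<^sub>R y)) = D (V *\<^sub>R B)"
    using set_integral_bounded_linear[OF bl w(2)] V(2) by (simp add: B_def)
  moreover have "(LINT y:S|lborel. w y * (u z - D z)) = V * (u z - D z)"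
    using V(1) by simp
  ultimately have "V * (u z + s * D B)
      = (LINT y:S|lborel. w y * (u z - D z)) + (LINT y:S|lborel. D (w y *\<^sub>R y))"
    by (simp add: Dz linear_scale[OF lin] algebra_simps)
  also have "\<dots> = (LINT y:S|lborel. w y * (u z - D z) + D (w y *\<^sub>R y))"
    using w(1) set_integrable_bounded_linear[OF bl w(2)] by (simp add: set_integral_add)
  also have "\<dots> \<le> (LINT y:S|lborel. w y * u y)"
  proof (rule set_integral_mono)
    show "set_integrable lborel S (\<lambda>y. w y * (u z - D z) + D (w y *\<^sub>R y))"
      using w(1) set_integrable_bounded_linear[OF bl w(2)] by simp
    fix y assume y: "y \<in> S"
    have "u z + D (y - z) \<le> u y"
      using convex_on_above_tangent[OF u(1) z(2) _ D] y S by blast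
    then have "w y * (u z + D (y - z)) \<le> w y * u y" using w(4)[OF y] by (rule mult_left_mono)
    then show "w y * (u z - D z) + D (w y *\<^sub>R y) \<le> w y * u y"
      by (simp add: linear_scale[OF lin] linear_diff[OF lin] algebra_simps)
  qed (use w(3) in simp)
  finally have mean: "u z + s * D B \<le> (LINT y:S|lborel. w y * u y) / V"
    using V(2) by (simp add: field_simps)
  have "u z + D (0 - z) \<le> u 0" using convex_on_above_tangent[OF u(1) z(2) u(2) D] .
  then have "u z \<le> (1 - s) * D B" using u(3) by (simp add: Dz linear_neg[OF lin])
  then have "s * u z \<le> s * ((1 - s) * D B)" using s(1) by (rule mult_left_mono)
  moreover have "(1 - s) * (u z + s * D B) \<le> (1 - s) * ((LINT y:S|lborel. w y * u y) / V)"
    using mean s(2) by (intro mult_left_mono) auto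
  ultimately show ?thesis by (simp add: algebra_simps)
qed

lemma rel_interior_shift_shrink:
  fixes b q :: "'a::euclidean_space"
  assumes bq: "b - q \<in> rel_interior C" and C: "0 \<in> C" "q \<in> C"
  obtains s where "0 < s" "s \<le> 1" "(1 - s) *\<^sub>R b - q \<in> C"
proof -
  obtain e where e: "0 < e" "cball (b - q) e \<inter> affine hull C \<subseteq> C" and "b - q \<in> C"
    using bq unfolding mem_rel_interior_cball by blast
  define s where "s = min 1 (e / (norm b + 1))"
  have nb: "0 < norm b + 1" by (simp add: add_nonneg_pos)
  then have s: "0 < s" "s \<le> 1" using e by (auto simp: s_def)
  have "s \<le> e / (norm b + 1)" by (simp add: s_def)
  then have "s * (norm b + 1) \<le> e" using nb by (simp add: pos_le_divide_eq)
  then have dist: "dist (b - q) ((1 - s) *\<^sub>R b - q) \<le> e"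
    using s by (simp add: dist_norm algebra_simps)
  have "(1 - s) *\<^sub>R (b - q) + s *\<^sub>R (2 *\<^sub>R 0 + (-1) *\<^sub>R q) \<in> affine hull C"
    using \<open>b - q \<in> C\<close> C
    by (intro mem_affine[OF affine_affine_hull] hull_inc) (auto intro: hull_inc)
  moreover have "(1 - s) *\<^sub>R (b - q) + s *\<^sub>R (2 *\<^sub>R 0 + (-1) *\<^sub>R q) = (1 - s) *\<^sub>R b - q"
    by (simp add: algebra_simps)
  ultimately have "(1 - s) *\<^sub>R b - q \<in> C" using dist e(2) by auto
  with s that show ?thesis by blast
qed

lemma four_rho_mem_pos_cone: "4 *\<^sub>R rho R \<in> pos_cone R"
proof -
  have "4 *\<^sub>R rho R = (\<Sum>\<alpha>\<in>R. 2 *\<^sub>R \<alpha>)" by (simp add: rho_def scaleR_sum_right)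
  then show ?thesis unfolding pos_cone_def by (intro CollectI exI[of _ "\<lambda>_. 2"]) auto
qed

lemma zero_mem_pos_cone: "0 \<in> pos_cone R"
  unfolding pos_cone_def by (intro CollectI exI[of _ "\<lambda>_. 0"]) auto

lemma root_pos_interior_polyQ_plus:
  assumes "\<alpha> \<in> R" "0 \<notin> R" "x \<in> interior (polyQ_plus R a c d)"
  shows "0 < \<alpha> \<bullet> x"
  using interior_subset_halfspace_gt[of "polyQ_plus R a c d" 0 \<alpha> x] assms
  by (auto simp: polyQ_plus_def)

lemma continuous_on_piR: "continuous_on A (piR R)"
  unfolding piR_def by (intro continuous_intros)

lemma continuous_on_thetaX_weight:
  "continuous_on A (\<lambda>y. (1 - thetaX R a c d \<xi> y) * piR R y)"
  unfolding thetaX_def using continuous_on_piR by (intro continuous_intros)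

lemma volV_pos:
  assumes "bounded (polyQ a c d)" "0 \<notin> R" "x \<in> interior (polyQ_plus R a c d)"
  shows "0 < volV R a c d"
  unfolding volV_def
proof (rule set_integral_pos_if_pos_at_interior)
  show "compact (polyQ_plus R a c d)" using assms(1) by (rule compact_polyQ_plus)
  show "0 < piR R x" unfolding piR_def
    using root_pos_interior_polyQ_plus[OF _ assms(2,3)] by (intro prod_pos zero_less_power) simp
  show "continuous_on (polyQ_plus R a c d) (piR R)" by (rule continuous_on_piR)
qed (auto simp: piR_def assms(3) intro: prod_nonneg)

lemma set_integral_thetaX_weight:
  assumes "compact (polyQ_plus R a c d)" "volV R a c d \<noteq> 0"
  shows "(LINT y:polyQ_plus R a c d|lborel. (1 - thetaX R a c d \<xi> y) * piR R y) = volV R a c d"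
proof -
  let ?S = "polyQ_plus R a c d" and ?V = "volV R a c d" and ?b = "barycenter R a c d"
  define P where "P = (LINT y:?S|lborel. piR R y *\<^sub>R y)"
  have ip: "set_integrable lborel ?S (piR R)"
    and ipy: "set_integrable lborel ?S (\<lambda>y. piR R y *\<^sub>R y)"
    using assms(1) by (auto intro!: set_integrable_compact_continuous continuous_intros
        simp: continuous_on_piR)
  have V: "(LINT y:?S|lborel. piR R y) = ?V" by (simp add: volV_def)
  have "(\<lambda>y. (1 - thetaX R a c d \<xi> y) * piR R y)
      = (\<lambda>y. (1 + \<xi> \<bullet> ?b) * piR R y - \<xi> \<bullet> (piR R y *\<^sub>R y))"
    by (simp add: fun_eq_iff thetaX_def inner_diff_right algebra_simps)
  then have "(LINT y:?S|lborel. (1 - thetaX R a c d \<xi> y) * piR R y)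
      = (LINT y:?S|lborel. (1 + \<xi> \<bullet> ?b) * piR R y) - (LINT y:?S|lborel. \<xi> \<bullet> (piR R y *\<^sub>R y))"
    using ip set_integrable_bounded_linear[OF bounded_linear_inner_right ipy]
    by (simp only: set_integral_diff(2) set_integrable_mult_right)
  also have "\<dots> = (1 + \<xi> \<bullet> ?b) * ?V - \<xi> \<bullet> P"
    unfolding P_def using V set_integral_bounded_linear[OF bounded_linear_inner_right ipy]
    by simp
  also have "\<dots> = ?V"
    using assms(2) by (simp add: barycenter_def P_def algebra_simps)
  finally show ?thesis .
qed

lemma one_minus_thetaX_nonneg:
  assumes "bounded (polyQ a c d)" "0 \<le> cX R a c d \<xi>" "y \<in> polyQ a c d"
  shows "0 \<le> 1 - thetaX R a c d \<xi> y"
proof -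
  have "compact ((\<lambda>y. 1 - thetaX R a c d \<xi> y) ` polyQ a c d)"
    using assms(1) closed_polyQ unfolding thetaX_def
    by (intro compact_continuous_image continuous_intros) (simp add: compact_eq_bounded_closed)
  then have "cX R a c d \<xi> \<le> 1 - thetaX R a c d \<xi> y"
    unfolding cX_def using assms(3)
    by (intro cInf_lower) (auto intro: bounded_imp_bdd_below compact_imp_bounded)
  with assms(2) show ?thesis by simp
qed

lemma thetaX_weight_nonneg:
  assumes "bounded (polyQ a c d)" "0 \<le> cX R a c d \<xi>" "y \<in> polyQ_plus R a c d"
  shows "0 \<le> (1 - thetaX R a c d \<xi> y) * piR R y"
  using one_minus_thetaX_nonneg[OF assms(1,2)] assms(3)
  by (auto simp: piR_def polyQ_plus_def intro!: prod_nonneg mult_nonneg_nonneg)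

lemma bX_mem_polyQ:
  assumes "bounded (polyQ a c d)" "0 \<le> cX R a c d \<xi>" "0 < volV R a c d"
  shows "bX R a c d \<xi> \<in> polyQ a c d"
proof -
  let ?S = "polyQ_plus R a c d" and ?w = "\<lambda>y. (1 - thetaX R a c d \<xi> y) * piR R y"
  have S: "compact ?S" "?S \<subseteq> polyQ a c d"
    using compact_polyQ_plus[OF assms(1)] by (auto simp: polyQ_plus_def)
  have "- c k \<le> a k \<bullet> bX R a c d \<xi>" if "k < d" for k
    unfolding bX_def
  proof (rule weighted_mean_in_halfspace)
    show "set_integrable lborel ?S ?w"
      by (rule set_integrable_compact_continuous[OF S(1) continuous_on_thetaX_weight])
    show "set_integrable lborel ?S (\<lambda>y. ?w y *\<^sub>R y)"
      by (rule set_integrable_compact_continuous[OF S(1)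
            continuous_on_scaleR[OF continuous_on_thetaX_weight continuous_on_id]])
    show "0 \<le> ?w y" if "y \<in> ?S" for y using thetaX_weight_nonneg[OF assms(1,2) that] .
    show "(LINT y:?S|lborel. ?w y) = volV R a c d"
      using S(1) assms(3) by (simp add: set_integral_thetaX_weight)
    show "- c k \<le> a k \<bullet> y" if "y \<in> ?S" for y
      using that S(2) \<open>k < d\<close> by (auto simp: polyQ_eq_Inter_halfspaces)
  qed (use assms(3) in simp)
  then show ?thesis by (simp add: polyQ_eq_Inter_halfspaces)
qed

lemma C_W_root_refl_invariant:
  assumes "u \<in> C_W R a c d" "\<forall>w\<in>weyl_group R. w ` polyQ a c d = polyQ a c d"
    and "\<alpha> \<in> R" "y \<in> polyQ a c d"
  shows "root_refl \<alpha> y \<in> polyQ a c d \<and> u (root_refl \<alpha> y) = u y"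
  using assms root_refl_mem_weyl_group[OF assms(3)] by (auto simp: C_W_def)

lemma C_W_mono_pos_cone:
  assumes u: "u \<in> C_W R a c d" and Weyl: "\<forall>w\<in>weyl_group R. w ` polyQ a c d = polyQ a c d"
    and R0: "0 \<notin> R" and q: "q \<in> interior (polyQ_plus R a c d)"
    and z: "z \<in> polyQ a c d" "z - q \<in> pos_cone R"
  shows "u q \<le> u z"
proof -
  have conv: "convex_on (polyQ a c d) u"
    using u strictly_convex_on_imp_convex_on by (auto simp: C_W_def)
  have q': "q \<in> interior (polyQ a c d)"
    using q interior_mono[of "polyQ_plus R a c d"] by (auto simp: polyQ_plus_def)
  obtain D where D: "(u has_derivative D) (at q)"
    using C_W_differentiable[OF u q'] by (auto simp: differentiable_def)
  show ?thesis
  proof (rule convex_on_root_refl_invariant_mono_pos_cone[OF conv _ q' _ D z])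
    show "0 \<le> \<alpha> \<bullet> q" if "\<alpha> \<in> R" for \<alpha>
      using root_pos_interior_polyQ_plus[OF that R0 q] by simp
  qed (use C_W_root_refl_invariant[OF u Weyl] in blast)
qed

lemma C_W_le_shrunk_bX:
  assumes Q: "bounded (polyQ a c d)" "0 \<in> polyQ a c d"
    and cX: "0 \<le> cX R a c d \<xi>" and V: "0 < volV R a c d"
    and u: "u \<in> C_W R a c d" "u 0 = 0"
    and s: "0 \<le> s" "s \<le> 1" and z: "(1 - s) *\<^sub>R bX R a c d \<xi> \<in> interior (polyQ a c d)"
  shows "u ((1 - s) *\<^sub>R bX R a c d \<xi>) \<le> (1 - s) / volV R a c d *
    (LINT y:polyQ_plus R a c d|lborel. (1 - thetaX R a c d \<xi> y) * piR R y * u y)"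
proof -
  let ?S = "polyQ_plus R a c d" and ?w = "\<lambda>y. (1 - thetaX R a c d \<xi> y) * piR R y"
  have S: "compact ?S" "?S \<subseteq> polyQ a c d"
    using compact_polyQ_plus[OF Q(1)] by (auto simp: polyQ_plus_def)
  have conv: "convex_on (polyQ a c d) u"
    using u strictly_convex_on_imp_convex_on by (auto simp: C_W_def)
  obtain D where D: "(u has_derivative D) (at ((1 - s) *\<^sub>R bX R a c d \<xi>))"
    using C_W_differentiable[OF u(1) z] by (auto simp: differentiable_def)
  show ?thesis
  proof (rule convex_on_le_shrunk_weighted_mean[OF conv Q(2) u(2) S(2) _ _ _ _ _ V s _ _ D])
    have "continuous_on ?S u" using C_W_continuous_on[OF u(1)] S(2) by (rule continuous_on_subset)
    then show "set_integrable lborel ?S (\<lambda>y. ?w y * u y)"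
      by (intro set_integrable_compact_continuous[OF S(1)]
          continuous_on_mult[OF continuous_on_thetaX_weight])
    show "set_integrable lborel ?S ?w"
      by (rule set_integrable_compact_continuous[OF S(1) continuous_on_thetaX_weight])
    show "set_integrable lborel ?S (\<lambda>y. ?w y *\<^sub>R y)"
      by (rule set_integrable_compact_continuous[OF S(1)
            continuous_on_scaleR[OF continuous_on_thetaX_weight continuous_on_id]])
    show "(LINT y:?S|lborel. ?w y) = volV R a c d"
      using S(1) V by (simp add: set_integral_thetaX_weight)
  qed (use z interior_subset thetaX_weight_nonneg[OF Q(1) cX] in \<open>auto simp: bX_def\<close>)
qed

theorem proposition4p4:
  fixes R :: "'a::euclidean_space set"
    and a :: "nat \<Rightarrow> 'a" and c :: "nat \<Rightarrow> real" and d :: nat and \<xi> :: 'a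
  assumes "positive_root_system R"
    and "facet_presentation a c d"
    and "\<forall>w\<in>weyl_group R. w ` polyQ a c d = polyQ a c d"
    and "0 \<in> interior (polyQ a c d)"
    and "4 *\<^sub>R rho R \<in> interior (polyQ_plus R a c d)"
    and "is_xiX R a c d \<xi>"
    and "cX R a c d \<xi> > 0"
    and "bX R a c d \<xi> - 4 *\<^sub>R rho R \<in> Xi R"
  shows "\<exists>l>0. \<forall>u\<in>hatC_W R a c d.
           LX R a c d \<xi> u \<ge> l * (LINT y : polyQ_plus R a c d | lborel.
                                   u y * piR R y * (1 - thetaX R a c d \<xi> y))"
proof -
  let ?Q = "polyQ a c d" and ?S = "polyQ_plus R a c d" and ?V = "volV R a c d"
    and ?q = "4 *\<^sub>R rho R" and ?B = "bX R a c d \<xi>"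
  have Q: "bounded ?Q" using assms(2) by (simp add: facet_presentation_def)
  have R0: "0 \<notin> R" using assms(1) by (simp add: positive_root_system_def)
  have V: "0 < ?V" using volV_pos[OF Q R0 assms(5)] .
  have cX: "0 \<le> cX R a c d \<xi>" using assms(7) by simp
  obtain s where s: "0 < s" "s \<le> 1" and cone: "(1 - s) *\<^sub>R ?B - ?q \<in> pos_cone R"
    using assms(8) unfolding Xi_def
    by (rule rel_interior_shift_shrink[OF _ zero_mem_pos_cone four_rho_mem_pos_cone])
  have z: "(1 - s) *\<^sub>R ?B \<in> interior ?Q"
    using mem_interior_convex_shrink[OF convex_polyQ assms(4) bX_mem_polyQ[OF Q cX V] s]
    by (simp add: algebra_simps)
  show ?thesis
  proof (intro exI[of _ "s / ?V"] conjI ballI)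
    fix u assume "u \<in> hatC_W R a c d"
    then have u: "u \<in> C_W R a c d" "u 0 = 0" by (auto simp: hatC_W_def)
    have "u ?q \<le> u ((1 - s) *\<^sub>R ?B)"
      using C_W_mono_pos_cone[OF u(1) assms(3) R0 assms(5) _ cone] z interior_subset by blast
    also have "\<dots> \<le> (1 - s) / ?V * (LINT y:?S|lborel. (1 - thetaX R a c d \<xi> y) * piR R y * u y)"
      using C_W_le_shrunk_bX[OF Q _ cX V u _ _ z] assms(4) interior_subset s by auto
    finally show "s / ?V * (LINT y:?S|lborel. u y * piR R y * (1 - thetaX R a c d \<xi> y))
        \<le> LX R a c d \<xi> u"
      using V by (simp add: LX_def mult_ac field_simps)
  qed (use s V in simp)
qed

end
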